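(* Consider a finite reward-free MDP with occupancy polytope $\Phi$, let $\mathcal D=\{(d_e^k,\epsilon^k)\}_{k=1}^K$ with $d_e^k\in\Phi$, $\epsilon^k\ge0$, and let $\delta\ge0$. If $r\in\mathcal R_\delta(\mathcal D)$, then for every $d\in\Phi$, \[\mathrm{subopt}(r,d)\ge\delta\sum_{(s,a)\in\mathcal I_{\mathcal D}}d(s,a)-\min_{k\in[K]}\epsilon^k.\]
   Context: The MDP has finite $S$, $A$, transitions $P$, initial distribution $\mu_0$, discount $\gamma\in(0,1)$; $M\in\mathbb R^{|S|\times|S||A|}$ is given by $(Md)(s)=\sum_a d(s,a)-\gamma\sum_{s',a'}P(s\mid s',a')d(s',a')$ and $\Phi=\{d\ge0:Md=(1-\gamma)\mu_0\}$. Rewards are $r\in\Delta(S\times A)$. $\mathrm{subopt}(r,d):=\max_{\tilde d\in\Phi}r^\top\tilde d-r^\top d$. Let $\bar d:=\frac1K\sum_{k=1}^Kd_e^k$ and $\mathcal I_{\mathcal D}:=\{(s,a):\bar d(s,a)=0\}$. Define $\mathcal R_\delta(\mathcal D)$ as the set of $r\in\Delta(S\times A)$ for which there exists $v\in\mathbb R^{|S|}$ with $(1-\gamma)\mu_0^\top v-r^\top d_e^k\le\epsilon^k$ for all $k\in[K]$ and $(M^\top v-r)(s,a)\ge\delta\,\mathbf 1\{(s,a)\in\mathcal I_{\mathcal D}\}$ for all $(s,a)\in S\times A$. *)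

theory Defs
  imports Complex_Main
begin

text \<open>Finite MDP with state type 's and action type 'a (both finite).
  Transition kernel: P s s' a' = P(s | s', a').\<close>

definition is_mdp :: "('s::finite \<Rightarrow> 's \<Rightarrow> 'a::finite \<Rightarrow> real) \<Rightarrow> ('s \<Rightarrow> real) \<Rightarrow> real \<Rightarrow> bool" where
  "is_mdp P \<mu>0 \<gamma> \<longleftrightarrow>
     (\<forall>s s' a. 0 \<le> P s s' a) \<and> (\<forall>s' a. (\<Sum>s\<in>UNIV. P s s' a) = 1) \<and>
     (\<forall>s. 0 \<le> \<mu>0 s) \<and> (\<Sum>s\<in>UNIV. \<mu>0 s) = 1 \<and> 0 < \<gamma> \<and> \<gamma> < 1"

definition Mmat :: "('s::finite \<Rightarrow> 's \<Rightarrow> 'a::finite \<Rightarrow> real) \<Rightarrow> real \<Rightarrow> 's \<Rightarrow> 's \<times> 'a \<Rightarrow> real" where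
  "Mmat P \<gamma> s x = (if fst x = s then 1 else 0) - \<gamma> * P s (fst x) (snd x)"

definition Mapply :: "('s::finite \<Rightarrow> 's \<Rightarrow> 'a::finite \<Rightarrow> real) \<Rightarrow> real \<Rightarrow> ('s \<times> 'a \<Rightarrow> real) \<Rightarrow> 's \<Rightarrow> real" where
  "Mapply P \<gamma> d s = (\<Sum>x\<in>UNIV. Mmat P \<gamma> s x * d x)"

definition MTapply :: "('s::finite \<Rightarrow> 's \<Rightarrow> 'a::finite \<Rightarrow> real) \<Rightarrow> real \<Rightarrow> ('s \<Rightarrow> real) \<Rightarrow> 's \<times> 'a \<Rightarrow> real" where
  "MTapply P \<gamma> v x = (\<Sum>s\<in>UNIV. Mmat P \<gamma> s x * v s)"

definition Phi :: "('s::finite \<Rightarrow> 's \<Rightarrow> 'a::finite \<Rightarrow> real) \<Rightarrow> ('s \<Rightarrow> real) \<Rightarrow> real \<Rightarrow> ('s \<times> 'a \<Rightarrow> real) set" where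
  "Phi P \<mu>0 \<gamma> = {d. (\<forall>x. 0 \<le> d x) \<and> (\<forall>s. Mapply P \<gamma> d s = (1 - \<gamma>) * \<mu>0 s)}"

definition simplex :: "('b::finite \<Rightarrow> real) set" where
  "simplex = {r. (\<forall>x. 0 \<le> r x) \<and> (\<Sum>x\<in>UNIV. r x) = 1}"

definition inner_sa :: "('b::finite \<Rightarrow> real) \<Rightarrow> ('b \<Rightarrow> real) \<Rightarrow> real" where
  "inner_sa r d = (\<Sum>x\<in>UNIV. r x * d x)"

definition subopt :: "('s::finite \<Rightarrow> 's \<Rightarrow> 'a::finite \<Rightarrow> real) \<Rightarrow> ('s \<Rightarrow> real) \<Rightarrow> real \<Rightarrow> ('s \<times> 'a \<Rightarrow> real) \<Rightarrow> ('s \<times> 'a \<Rightarrow> real) \<Rightarrow> real" where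
  "subopt P \<mu>0 \<gamma> r d = (SUP d'\<in>Phi P \<mu>0 \<gamma>. inner_sa r d') - inner_sa r d"

text \<open>Dataset D = {(dE k, eps k)}, k = 1..K.\<close>
definition dbar :: "nat \<Rightarrow> (nat \<Rightarrow> 'b \<Rightarrow> real) \<Rightarrow> 'b \<Rightarrow> real" where
  "dbar K dE x = (1 / real K) * (\<Sum>k=1..K. dE k x)"

definition ID :: "nat \<Rightarrow> (nat \<Rightarrow> 'b \<Rightarrow> real) \<Rightarrow> 'b set" where
  "ID K dE = {x. dbar K dE x = 0}"

definition Rdelta :: "('s::finite \<Rightarrow> 's \<Rightarrow> 'a::finite \<Rightarrow> real) \<Rightarrow> ('s \<Rightarrow> real) \<Rightarrow> real \<Rightarrow> real
    \<Rightarrow> nat \<Rightarrow> (nat \<Rightarrow> 's \<times> 'a \<Rightarrow> real) \<Rightarrow> (nat \<Rightarrow> real) \<Rightarrow> ('s \<times> 'a \<Rightarrow> real) set" where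
  "Rdelta P \<mu>0 \<gamma> \<delta> K dE eps =
     {r \<in> simplex. \<exists>v :: 's \<Rightarrow> real.
        (\<forall>k\<in>{1..K}. (1 - \<gamma>) * (\<Sum>s\<in>UNIV. \<mu>0 s * v s) - inner_sa r (dE k) \<le> eps k) \<and>
        (\<forall>x. MTapply P \<gamma> v x - r x \<ge> \<delta> * (if x \<in> ID K dE then 1 else 0))}"

end

theory Submission
  imports Defs
begin

text \<open>Weak LP duality. For every d in \<Phi> we have r'd = (1-\<gamma>) \<mu>0'v - (M'v - r)'d,
  since (M'v)'d = v'(Md) = (1-\<gamma>) \<mu>0'v. The slack M'v - r is at least \<delta> on the
  unvisited pairs, which bounds r'd by (1-\<gamma>) \<mu>0'v minus \<delta> times the mass d puts there.
  In the other direction, the expert occupancy with the smallest \<epsilon>k lies in \<Phi> and has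
  value at least (1-\<gamma>) \<mu>0'v - \<epsilon>k.\<close>

lemma inner_sa_MTapply:
  fixes P :: "'s::finite \<Rightarrow> 's \<Rightarrow> 'a::finite \<Rightarrow> real"
  shows "inner_sa (MTapply P \<gamma> v) d = (\<Sum>s\<in>UNIV. v s * Mapply P \<gamma> d s)"
proof -
  have "inner_sa (MTapply P \<gamma> v) d = (\<Sum>x\<in>UNIV. \<Sum>s\<in>UNIV. Mmat P \<gamma> s x * v s * d x)"
    unfolding inner_sa_def MTapply_def by (simp add: sum_distrib_right)
  also have "\<dots> = (\<Sum>s\<in>UNIV. \<Sum>x\<in>UNIV. Mmat P \<gamma> s x * v s * d x)"
    by (rule sum.swap)
  also have "\<dots> = (\<Sum>s\<in>UNIV. v s * Mapply P \<gamma> d s)"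
    unfolding Mapply_def by (simp add: sum_distrib_left mult_ac)
  finally show ?thesis .
qed

lemma inner_sa_MTapply_Phi:
  fixes P :: "'s::finite \<Rightarrow> 's \<Rightarrow> 'a::finite \<Rightarrow> real"
  assumes "d \<in> Phi P \<mu>0 \<gamma>"
  shows "inner_sa (MTapply P \<gamma> v) d = (1 - \<gamma>) * (\<Sum>s\<in>UNIV. \<mu>0 s * v s)"
  using assms unfolding inner_sa_MTapply Phi_def
  by (simp add: sum_distrib_left mult_ac)

lemma inner_sa_Phi_le_dual_value:
  fixes P :: "'s::finite \<Rightarrow> 's \<Rightarrow> 'a::finite \<Rightarrow> real"
  assumes d: "d \<in> Phi P \<mu>0 \<gamma>"
    and slack: "\<And>x. c x \<le> MTapply P \<gamma> v x - r x"
  shows "inner_sa r d \<le> (1 - \<gamma>) * (\<Sum>s\<in>UNIV. \<mu>0 s * v s) - inner_sa c d"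
proof -
  have "\<And>x. 0 \<le> d x" using d unfolding Phi_def by blast
  then have "inner_sa c d \<le> inner_sa (\<lambda>x. MTapply P \<gamma> v x - r x) d"
    unfolding inner_sa_def by (intro sum_mono mult_right_mono slack)
  also have "\<dots> = inner_sa (MTapply P \<gamma> v) d - inner_sa r d"
    unfolding inner_sa_def by (simp add: left_diff_distrib sum_subtractf)
  finally show ?thesis using inner_sa_MTapply_Phi[OF d, of v] by linarith
qed

lemma inner_sa_indicator:
  fixes d :: "'b::finite \<Rightarrow> real"
  shows "inner_sa (\<lambda>x. \<delta> * (if x \<in> I then 1 else 0)) d = \<delta> * (\<Sum>x\<in>I. d x)"
proof -
  have "inner_sa (\<lambda>x. \<delta> * (if x \<in> I then 1 else 0)) d = (\<Sum>x\<in>UNIV. if x \<in> I then \<delta> * d x else 0)"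
    unfolding inner_sa_def by (rule sum.cong) auto
  also have "\<dots> = \<delta> * (\<Sum>x\<in>I. d x)"
    by (simp add: sum.If_cases sum_distrib_left)
  finally show ?thesis .
qed

lemma bdd_above_inner_sa_Phi:
  fixes P :: "'s::finite \<Rightarrow> 's \<Rightarrow> 'a::finite \<Rightarrow> real"
  assumes "\<And>x. r x \<le> MTapply P \<gamma> v x"
  shows "bdd_above (inner_sa r ` Phi P \<mu>0 \<gamma>)"
proof (rule bdd_aboveI2)
  fix d assume "d \<in> Phi P \<mu>0 \<gamma>"
  from inner_sa_Phi_le_dual_value[OF this, of "\<lambda>_. 0"] assms
  show "inner_sa r d \<le> (1 - \<gamma>) * (\<Sum>s\<in>UNIV. \<mu>0 s * v s)"
    by (simp add: inner_sa_def)
qed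

theorem mainTheorem10:
  fixes P :: "'s::finite \<Rightarrow> 's \<Rightarrow> 'a::finite \<Rightarrow> real"
    and \<mu>0 :: "'s \<Rightarrow> real" and \<gamma> \<delta> :: real and K :: nat
    and dE :: "nat \<Rightarrow> 's \<times> 'a \<Rightarrow> real" and eps :: "nat \<Rightarrow> real"
    and r d :: "'s \<times> 'a \<Rightarrow> real"
  assumes "is_mdp P \<mu>0 \<gamma>"
    and "1 \<le> K"
    and "\<forall>k\<in>{1..K}. dE k \<in> Phi P \<mu>0 \<gamma>"
    and "\<forall>k\<in>{1..K}. 0 \<le> eps k"
    and "0 \<le> \<delta>"
    and "r \<in> Rdelta P \<mu>0 \<gamma> \<delta> K dE eps"
    and "d \<in> Phi P \<mu>0 \<gamma>"
  shows "subopt P \<mu>0 \<gamma> r d \<ge> \<delta> * (\<Sum>x\<in>ID K dE. d x) - Min (eps ` {1..K})"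
proof -
  define c where "c x = \<delta> * (if x \<in> ID K dE then 1 else 0)" for x
  obtain v where expert: "\<forall>k\<in>{1..K}. (1 - \<gamma>) * (\<Sum>s\<in>UNIV. \<mu>0 s * v s) - inner_sa r (dE k) \<le> eps k"
    and slack: "\<And>x. c x \<le> MTapply P \<gamma> v x - r x"
    using assms(6) unfolding Rdelta_def c_def by auto
  have "\<And>x. r x \<le> MTapply P \<gamma> v x"
    using slack[unfolded c_def] assms(5) by (smt (verit) mult_nonneg_nonneg)
  then have bdd: "bdd_above (inner_sa r ` Phi P \<mu>0 \<gamma>)"
    by (rule bdd_above_inner_sa_Phi)
  obtain k where k: "k \<in> {1..K}" "eps k = Min (eps ` {1..K})"
  proof -
    have "Min (eps ` {1..K}) \<in> eps ` {1..K}" using assms(2) by (intro Min_in) auto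
    then show ?thesis using that by (metis imageE)
  qed
  have "inner_sa r (dE k) \<le> (SUP d'\<in>Phi P \<mu>0 \<gamma>. inner_sa r d')"
    using assms(3) k(1) by (intro cSUP_upper[OF _ bdd]) auto
  moreover have "inner_sa r d \<le> (1 - \<gamma>) * (\<Sum>s\<in>UNIV. \<mu>0 s * v s) - \<delta> * (\<Sum>x\<in>ID K dE. d x)"
    using inner_sa_Phi_le_dual_value[OF assms(7) slack] by (simp add: c_def inner_sa_indicator)
  moreover have "(1 - \<gamma>) * (\<Sum>s\<in>UNIV. \<mu>0 s * v s) - eps k \<le> inner_sa r (dE k)"
    using expert k(1) by fastforce
  ultimately show ?thesis
    using k(2) unfolding subopt_def by linarith
qed

end
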